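(* Let $\mathcal V$ be a finite-dimensional Euclidean space, consider linear losses $f_t(x)=\langle g_t,x\rangle$ and uniform delay $\tau$, i.e. $\mathcal S_t=\{1,\dots,t-\tau-1\}$ for all $t$. Run DODA with guesses $\tilde g_{t+1/2}=g_{t-\tau-1}$ and constant learning rates $\eta=r/\sqrt{(2\tau+1)V^{\tau+1}_T}$, $\gamma=(2\tau+1)\eta$, where $r\ge\|p-x_1\|$ and $V^{\tau+1}_T>0$. Then \[R_T(p)\le r\sqrt{(2\tau+1)V^{\tau+1}_T}.\]
   Context: DODA (unconstrained Euclidean): given $x_1\in\mathcal V$, $x_t=x_1-\eta_t\sum_{s\in\mathcal S_t}g_{s+1/2}$ and $x_{t+1/2}=x_t-\gamma_t\tilde g_{t+1/2}$; the played point at round $t$ is $x_{t+1/2}$, with feedback $g_{t+1/2}=\nabla f_t(x_{t+1/2})$, which for linear losses equals $g_t$. Regret: $R_T(p)=\sum_{t=1}^Tf_t(x_{t+1/2})-\sum_{t=1}^Tf_t(p)$. Convention $g_t=0$ for $t\le0$. The $(\tau+1)$-variation is $V^{\tau+1}_T=\sum_{t=1}^T\|g_t-g_{t-\tau-1}\|^2$. *)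

theory Defs
  imports "HOL-Analysis.Analysis"
begin

text \<open>Losses are linear, f_t(x) = <g t, x>, for rounds t = 1,2,...; the value g 0 is never
  used. The convention g_t = 0 for t \<le> 0 is encoded by the delayed sequence below.\<close>

definition delayed_grad :: "(nat \<Rightarrow> 'a::real_vector) \<Rightarrow> nat \<Rightarrow> nat \<Rightarrow> 'a" where
  "delayed_grad g \<tau> t = (if t > \<tau> + 1 then g (t - \<tau> - 1) else 0)"

definition doda_x :: "'a::real_vector \<Rightarrow> real \<Rightarrow> (nat \<Rightarrow> 'a) \<Rightarrow> nat \<Rightarrow> nat \<Rightarrow> 'a" where
  "doda_x x1 \<eta> g \<tau> t = x1 - \<eta> *\<^sub>R (\<Sum>s\<in>{s. 1 \<le> s \<and> s + \<tau> + 1 \<le> t}. g s)"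

definition doda_xhalf :: "'a::real_vector \<Rightarrow> real \<Rightarrow> real \<Rightarrow> (nat \<Rightarrow> 'a) \<Rightarrow> nat \<Rightarrow> nat \<Rightarrow> 'a" where
  "doda_xhalf x1 \<eta> \<gamma> g \<tau> t = doda_x x1 \<eta> g \<tau> t - \<gamma> *\<^sub>R delayed_grad g \<tau> t"

definition regret :: "'a::real_inner \<Rightarrow> real \<Rightarrow> real \<Rightarrow> (nat \<Rightarrow> 'a) \<Rightarrow> nat \<Rightarrow> nat \<Rightarrow> 'a \<Rightarrow> real" where
  "regret x1 \<eta> \<gamma> g \<tau> T p =
     (\<Sum>t=1..T. inner (g t) (doda_xhalf x1 \<eta> \<gamma> g \<tau> t)) - (\<Sum>t=1..T. inner (g t) p)"

definition variation :: "(nat \<Rightarrow> 'a::real_normed_vector) \<Rightarrow> nat \<Rightarrow> nat \<Rightarrow> real" where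
  "variation g \<tau> T = (\<Sum>t=1..T. (norm (g t - delayed_grad g \<tau> t))\<^sup>2)"

end

theory Submission
  imports Defs
begin

text \<open>With G the sum of all gradients, the regret equals <G, x_1 - p> minus \<eta> times the
  cross terms <g_t, g_s> over received rounds s and minus \<gamma> times <g_t, g_{t-\<tau>-1}>.
  Expanding |G|^2, the received cross terms miss only the pending ones (at most \<tau> per round),
  which cost at most 2\<tau> \<Sum>|g_t|^2; the guess recovers this energy up to the variation, as
  2 <g_t, g_{t-\<tau>-1}> \<ge> |g_t|^2 - |g_t - g_{t-\<tau>-1}|^2. Hence for every \<eta> \<ge> 0
  R_T(p) \<le> <G, x_1 - p> - \<eta>/2 (|G|^2 - (2\<tau>+1) V), and with the tuned \<eta> this is a concave
  quadratic in |G| whose maximum is r sqrt((2\<tau>+1) V).\<close>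

definition received_rounds :: "nat \<Rightarrow> nat \<Rightarrow> nat set" where
  "received_rounds \<tau> t = {s. 1 \<le> s \<and> s + \<tau> + 1 \<le> t}"

definition pending_rounds :: "nat \<Rightarrow> nat \<Rightarrow> nat set" where
  "pending_rounds \<tau> t = {s. 1 \<le> s \<and> s < t \<and> t \<le> s + \<tau>}"

lemma finite_received_rounds [simp]: "finite (received_rounds \<tau> t)"
  by (rule finite_subset[of _ "{..t}"]) (auto simp: received_rounds_def)

lemma finite_pending_rounds [simp]: "finite (pending_rounds \<tau> t)"
  by (rule finite_subset[of _ "{..t}"]) (auto simp: pending_rounds_def)

lemma sum_atLeastLessThan_received_pending:
  "(\<Sum>s=1..<t. f s) = (\<Sum>s\<in>received_rounds \<tau> t. f s) + (\<Sum>s\<in>pending_rounds \<tau> t. f s)"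
proof -
  have "{1..<t} = received_rounds \<tau> t \<union> pending_rounds \<tau> t"
    by (auto simp: received_rounds_def pending_rounds_def)
  moreover have "received_rounds \<tau> t \<inter> pending_rounds \<tau> t = {}"
    by (auto simp: received_rounds_def pending_rounds_def)
  ultimately show ?thesis by (simp add: sum.union_disjoint)
qed

lemma card_pending_rounds_le: "card (pending_rounds \<tau> t) \<le> \<tau>"
proof -
  have "card (pending_rounds \<tau> t) \<le> card {t - \<tau>..<t}"
    by (rule card_mono) (auto simp: pending_rounds_def)
  then show ?thesis by simp
qed

lemma card_rounds_pending_le: "card {t\<in>A. s \<in> pending_rounds \<tau> t} \<le> \<tau>"
proof -
  have "card {t\<in>A. s \<in> pending_rounds \<tau> t} \<le> card {s<..s + \<tau>}"
    by (rule card_mono) (auto simp: pending_rounds_def)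
  then show ?thesis by simp
qed

lemma two_inner_le_norms_squared:
  fixes x y :: "'a::real_inner"
  shows "2 * inner x y \<le> (norm x)\<^sup>2 + (norm y)\<^sup>2"
proof -
  have "0 \<le> (norm (x - y))\<^sup>2" by simp
  then show ?thesis
    by (simp add: power2_norm_eq_inner inner_diff_left inner_diff_right inner_commute)
qed

lemma norm_sum_atLeastAtMost_squared:
  fixes g :: "nat \<Rightarrow> 'a::real_inner"
  shows "(norm (\<Sum>t=1..T. g t))\<^sup>2
    = (\<Sum>t=1..T. (norm (g t))\<^sup>2 + 2 * inner (g t) (\<Sum>s=1..<t. g s))"
proof (induction T)
  case 0
  then show ?case by simp
next
  case (Suc T)
  have "(norm (\<Sum>t=1..Suc T. g t))\<^sup>2 = (norm ((\<Sum>t=1..T. g t) + g (Suc T)))\<^sup>2"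
    by simp
  also have "\<dots> = (norm (\<Sum>t=1..T. g t))\<^sup>2 + (norm (g (Suc T)))\<^sup>2
      + 2 * inner (g (Suc T)) (\<Sum>t=1..T. g t)"
    by (simp add: power2_norm_eq_inner inner_add_left inner_add_right inner_commute)
  finally show ?case
    using Suc by (simp add: atLeastLessThanSuc_atLeastAtMost)
qed

lemma sum_inner_pending_le:
  fixes g :: "nat \<Rightarrow> 'a::real_inner"
  shows "2 * (\<Sum>t=1..T. inner (g t) (\<Sum>s\<in>pending_rounds \<tau> t. g s))
    \<le> 2 * real \<tau> * (\<Sum>t=1..T. (norm (g t))\<^sup>2)"
proof -
  let ?P = "\<lambda>t. pending_rounds \<tau> t"
  have own: "(\<Sum>t=1..T. \<Sum>s\<in>?P t. (norm (g t))\<^sup>2) \<le> (\<Sum>t=1..T. real \<tau> * (norm (g t))\<^sup>2)"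
    by (rule sum_mono) (simp add: card_pending_rounds_le mult_right_mono)
  have "(\<Sum>t=1..T. \<Sum>s\<in>?P t. (norm (g s))\<^sup>2)
      = (\<Sum>t=1..T. \<Sum>s\<in>{s\<in>{1..T}. s \<in> ?P t}. (norm (g s))\<^sup>2)"
    by (intro sum.cong refl arg_cong[where f = "sum _"]) (auto simp: pending_rounds_def)
  also have "\<dots> = (\<Sum>s=1..T. \<Sum>t\<in>{t\<in>{1..T}. s \<in> ?P t}. (norm (g s))\<^sup>2)"
    by (rule sum.swap_restrict) simp_all
  also have "\<dots> \<le> (\<Sum>s=1..T. real \<tau> * (norm (g s))\<^sup>2)"
  proof (rule sum_mono)
    fix s
    have "card {t\<in>{1..T}. s \<in> ?P t} \<le> \<tau>"
      by (rule card_rounds_pending_le)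
    then show "(\<Sum>t\<in>{t\<in>{1..T}. s \<in> ?P t}. (norm (g s))\<^sup>2) \<le> real \<tau> * (norm (g s))\<^sup>2"
      by (simp only: sum_constant) (intro mult_right_mono; simp)
  qed
  finally have others: "(\<Sum>t=1..T. \<Sum>s\<in>?P t. (norm (g s))\<^sup>2) \<le> \<dots>" .
  have "2 * (\<Sum>t=1..T. inner (g t) (\<Sum>s\<in>?P t. g s)) = (\<Sum>t=1..T. \<Sum>s\<in>?P t. 2 * inner (g t) (g s))"
    by (simp add: inner_sum_right sum_distrib_left)
  also have "\<dots> \<le> (\<Sum>t=1..T. \<Sum>s\<in>?P t. (norm (g t))\<^sup>2 + (norm (g s))\<^sup>2)"
    by (intro sum_mono two_inner_le_norms_squared)
  also have "\<dots> = (\<Sum>t=1..T. \<Sum>s\<in>?P t. (norm (g t))\<^sup>2) + (\<Sum>t=1..T. \<Sum>s\<in>?P t. (norm (g s))\<^sup>2)"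
    by (simp only: sum.distrib)
  also have "\<dots> \<le> (\<Sum>t=1..T. real \<tau> * (norm (g t))\<^sup>2) + (\<Sum>s=1..T. real \<tau> * (norm (g s))\<^sup>2)"
    using own others by (rule add_mono)
  also have "\<dots> = 2 * real \<tau> * (\<Sum>t=1..T. (norm (g t))\<^sup>2)"
    by (simp add: sum_distrib_left[symmetric])
  finally show ?thesis .
qed

lemma norm_sum_squared_le_received:
  fixes g :: "nat \<Rightarrow> 'a::real_inner"
  shows "(norm (\<Sum>t=1..T. g t))\<^sup>2 - 2 * (\<Sum>t=1..T. inner (g t) (\<Sum>s\<in>received_rounds \<tau> t. g s))
    \<le> (2 * real \<tau> + 1) * (\<Sum>t=1..T. (norm (g t))\<^sup>2)"
proof -
  have "(norm (\<Sum>t=1..T. g t))\<^sup>2 = (\<Sum>t=1..T. (norm (g t))\<^sup>2)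
      + 2 * (\<Sum>t=1..T. inner (g t) (\<Sum>s\<in>received_rounds \<tau> t. g s))
      + 2 * (\<Sum>t=1..T. inner (g t) (\<Sum>s\<in>pending_rounds \<tau> t. g s))"
    unfolding norm_sum_atLeastAtMost_squared sum_atLeastLessThan_received_pending[where \<tau> = \<tau>]
    by (simp add: inner_add_right sum.distrib sum_distrib_left)
  then show ?thesis
    using sum_inner_pending_le[of g \<tau> T] by (simp add: algebra_simps)
qed

lemma regret_eq:
  "regret x1 \<eta> \<gamma> g \<tau> T p = inner (\<Sum>t=1..T. g t) (x1 - p)
    - \<eta> * (\<Sum>t=1..T. inner (g t) (\<Sum>s\<in>received_rounds \<tau> t. g s))
    - \<gamma> * (\<Sum>t=1..T. inner (g t) (delayed_grad g \<tau> t))"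
  unfolding regret_def doda_xhalf_def doda_x_def received_rounds_def
  by (simp add: inner_diff_right inner_sum_left sum_subtractf sum_distrib_left sum.distrib)

lemma variation_eq:
  "variation g \<tau> T = (\<Sum>t=1..T. (norm (g t))\<^sup>2) + (\<Sum>t=1..T. (norm (delayed_grad g \<tau> t))\<^sup>2)
    - 2 * (\<Sum>t=1..T. inner (g t) (delayed_grad g \<tau> t))"
  unfolding variation_def
  by (simp add: power2_norm_eq_inner inner_diff_left inner_diff_right inner_commute
      sum_subtractf sum.distrib sum_distrib_left algebra_simps)

theorem regret_le_variation:
  fixes g :: "nat \<Rightarrow> 'a::real_inner"
  assumes "\<eta> \<ge> 0"
  shows "regret x1 \<eta> ((2 * real \<tau> + 1) * \<eta>) g \<tau> T p
    \<le> inner (\<Sum>t=1..T. g t) (x1 - p)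
      - \<eta> / 2 * ((norm (\<Sum>t=1..T. g t))\<^sup>2 - (2 * real \<tau> + 1) * variation g \<tau> T)"
proof -
  define K where "K = 2 * real \<tau> + 1"
  define Q where "Q = (\<Sum>t=1..T. inner (g t) (\<Sum>s\<in>received_rounds \<tau> t. g s))"
  define C where "C = (\<Sum>t=1..T. inner (g t) (delayed_grad g \<tau> t))"
  define N where "N = (\<Sum>t=1..T. (norm (g t))\<^sup>2)"
  define H where "H = (\<Sum>t=1..T. (norm (delayed_grad g \<tau> t))\<^sup>2)"
  have "(norm (\<Sum>t=1..T. g t))\<^sup>2 - 2 * Q \<le> K * N"
    unfolding K_def Q_def N_def by (rule norm_sum_squared_le_received)
  moreover have "2 * C = N + H - variation g \<tau> T"
    unfolding variation_eq C_def N_def H_def by simp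
  then have "K * (2 * C) = K * (N + H - variation g \<tau> T)"
    by simp
  then have "2 * (K * C) = K * N + K * H - K * variation g \<tau> T"
    by (simp add: algebra_simps)
  moreover have "0 \<le> K * H"
    unfolding K_def H_def by (simp add: sum_nonneg)
  ultimately have "(norm (\<Sum>t=1..T. g t))\<^sup>2 - K * variation g \<tau> T \<le> 2 * (Q + K * C)"
    by (simp add: algebra_simps)
  from mult_left_mono[OF this assms] show ?thesis
    unfolding regret_eq K_def[symmetric] Q_def[symmetric] C_def[symmetric]
    by (simp add: algebra_simps)
qed

lemma tuned_quadratic_le:
  fixes a r S :: real
  assumes "r \<ge> 0" and "S > 0"
  shows "a * r - r / S / 2 * (a\<^sup>2 - S\<^sup>2) \<le> r * S"
proof -
  have "r * S - (a * r - r / S / 2 * (a\<^sup>2 - S\<^sup>2)) = r / S / 2 * (a - S)\<^sup>2"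
    using assms(2) by (simp add: field_simps power2_eq_square)
  moreover have "0 \<le> r / S / 2 * (a - S)\<^sup>2"
    using assms by simp
  ultimately show ?thesis by linarith
qed

theorem corollary2:
  fixes g :: "nat \<Rightarrow> 'a::euclidean_space" and x1 p :: 'a
    and \<tau> T :: nat and r \<eta> \<gamma> :: real
  assumes "norm (p - x1) \<le> r"
    and "variation g \<tau> T > 0"
    and "\<eta> = r / sqrt ((2 * real \<tau> + 1) * variation g \<tau> T)"
    and "\<gamma> = (2 * real \<tau> + 1) * \<eta>"
  shows "regret x1 \<eta> \<gamma> g \<tau> T p \<le> r * sqrt ((2 * real \<tau> + 1) * variation g \<tau> T)"
proof -
  define G where "G = (\<Sum>t=1..T. g t)"
  define S where "S = sqrt ((2 * real \<tau> + 1) * variation g \<tau> T)"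
  have "S > 0" and S_squared: "S\<^sup>2 = (2 * real \<tau> + 1) * variation g \<tau> T"
    using assms(2) by (simp_all add: S_def)
  have "r \<ge> 0"
    using assms(1) norm_ge_zero order_trans by blast
  have "inner G (x1 - p) \<le> norm G * r"
    using norm_cauchy_schwarz[of G "x1 - p"] assms(1)
    by (simp add: norm_minus_commute mult_left_mono order_trans)
  moreover have "\<eta> = r / S" "\<eta> \<ge> 0"
    using assms(3) \<open>r \<ge> 0\<close> \<open>S > 0\<close> by (simp_all add: S_def)
  ultimately have "regret x1 \<eta> \<gamma> g \<tau> T p \<le> norm G * r - r / S / 2 * ((norm G)\<^sup>2 - S\<^sup>2)"
    using regret_le_variation[of \<eta> x1 \<tau> g T p] assms(4)
    unfolding G_def[symmetric] S_squared[symmetric] by simp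
  also have "\<dots> \<le> r * S"
    using tuned_quadratic_le \<open>r \<ge> 0\<close> \<open>S > 0\<close> .
  finally show ?thesis
    unfolding S_def .
qed

end
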